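(* For every rational number $q\in\mathbb{Q}$ there exists a connected graph $G$ with $\iota(G)=q$.
   Context: For a connected graph $G$ on vertices $v_1,\dots,v_n$, its distance matrix is $D=(d(v_i,v_j))_{i,j=1}^n$, where $d$ is the shortest-path distance; $\vec 1$ denotes the all-ones vector. $G$ is distance exceptional if $D\vec x=\vec 1$ has no solution. A curvature potential is a vector $\vec x$ with $D\vec x=\vec 1$. Curvature index $\iota(G)\in\mathbb{R}\cup\{\infty\}$: if $G$ is distance exceptional or has a curvature potential $\vec x$ with $\vec 1^\top\vec x\neq0$, then $\iota(G)$ is the unique real number with $\{D\vec x:\vec 1^\top\vec x=1\}\cap\mathbb{R}\vec 1=\{\iota(G)\vec 1\}$; otherwise $\iota(G)=\infty$. *)

theory Defs
  imports Complex_Main "HOL-Library.Extended_Real"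
begin

definition simple_graph :: "nat \<Rightarrow> (nat \<Rightarrow> nat \<Rightarrow> bool) \<Rightarrow> bool" where
  "simple_graph n E \<longleftrightarrow>
     (\<forall>u v. E u v \<longrightarrow> u < n \<and> v < n \<and> u \<noteq> v) \<and> (\<forall>u v. E u v \<longrightarrow> E v u)"

definition is_walk :: "(nat \<Rightarrow> nat \<Rightarrow> bool) \<Rightarrow> nat list \<Rightarrow> bool" where
  "is_walk E p \<longleftrightarrow> p \<noteq> [] \<and> (\<forall>i. i + 1 < length p \<longrightarrow> E (p ! i) (p ! (i + 1)))"

definition connected_graph :: "nat \<Rightarrow> (nat \<Rightarrow> nat \<Rightarrow> bool) \<Rightarrow> bool" where
  "connected_graph n E \<longleftrightarrow> simple_graph n E \<and> n \<ge> 1 \<and>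
     (\<forall>u < n. \<forall>v < n. \<exists>p. is_walk E p \<and> hd p = u \<and> last p = v)"

definition gdist :: "(nat \<Rightarrow> nat \<Rightarrow> bool) \<Rightarrow> nat \<Rightarrow> nat \<Rightarrow> nat" where
  "gdist E u v = (LEAST k. \<exists>p. is_walk E p \<and> hd p = u \<and> last p = v \<and> length p = k + 1)"

definition dist_mult :: "nat \<Rightarrow> (nat \<Rightarrow> nat \<Rightarrow> bool) \<Rightarrow> (nat \<Rightarrow> real) \<Rightarrow> nat \<Rightarrow> real" where
  "dist_mult n E x i = (\<Sum>j<n. real (gdist E i j) * x j)"

definition curvature_potential :: "nat \<Rightarrow> (nat \<Rightarrow> nat \<Rightarrow> bool) \<Rightarrow> (nat \<Rightarrow> real) \<Rightarrow> bool" where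
  "curvature_potential n E x \<longleftrightarrow> (\<forall>i < n. dist_mult n E x i = 1)"

definition distance_exceptional :: "nat \<Rightarrow> (nat \<Rightarrow> nat \<Rightarrow> bool) \<Rightarrow> bool" where
  "distance_exceptional n E \<longleftrightarrow> \<not> (\<exists>x. curvature_potential n E x)"

text \<open>Curvature index, with value \<infinity> represented by the extended real PInfty.
  The set {c. c*1 \<in> {D x : 1^T x = 1}} corresponds to
  {D x : 1^T x = 1} \<inter> R 1 via c \<mapsto> c*1.\<close>
definition curvature_index :: "nat \<Rightarrow> (nat \<Rightarrow> nat \<Rightarrow> bool) \<Rightarrow> ereal" where
  "curvature_index n E =
     (if distance_exceptional n E \<or> (\<exists>x. curvature_potential n E x \<and> (\<Sum>j<n. x j) \<noteq> 0)
      then ereal (THE r. {c. \<exists>x. (\<Sum>j<n. x j) = 1 \<and> (\<forall>i<n. dist_mult n E x i = c)} = {r})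
      else PInfty)"

end

(* In a complete multipartite graph distinct vertices are at distance 1 or 2 according as
   they lie in different parts or in the same part, so
   (D x)_i = sum x + (sum of x over the part of i) - 2 x_i.  A potential that is constant on
   parts, equal to 1 / ((m - 2) (1 + T)) on a part of size m <> 2 where
   T = sum over all vertices v of 1 / (m_v - 2), therefore gives iota = 1 + 1/T, and a part of
   size 2 forces iota = 1.  For p >= 2 singleton parts and r parts of size s = 2 w + 2 one has
   T = r (w + 1) / w - p, which takes every rational value.  Finally iota = 0 for the single
   vertex, which is distance exceptional. *)

theory Submission
  imports Defs
begin

lemma gdist_le_walk:
  assumes "is_walk E p" "hd p = u" "last p = v"
  shows "gdist E u v \<le> length p - 1"
proof -
  have "p \<noteq> []" using assms(1) by (simp add: is_walk_def)
  then have "\<exists>p'. is_walk E p' \<and> hd p' = u \<and> last p' = v \<and> length p' = (length p - 1) + 1"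
    using assms by (intro exI[of _ p]) auto
  then show ?thesis unfolding gdist_def by (rule Least_le)
qed

lemma gdist_attained:
  assumes "is_walk E p" "hd p = u" "last p = v"
  obtains p' where "is_walk E p'" "hd p' = u" "last p' = v" "length p' = gdist E u v + 1"
proof -
  have "p \<noteq> []" using assms(1) by (simp add: is_walk_def)
  then have "\<exists>k p'. is_walk E p' \<and> hd p' = u \<and> last p' = v \<and> length p' = k + 1"
    using assms by (intro exI[of _ "length p - 1"] exI[of _ p]) auto
  from LeastI_ex[OF this] show ?thesis using that unfolding gdist_def by blast
qed

lemma is_walk_singleton: "is_walk E [u]"
  by (simp add: is_walk_def)

lemma is_walk_two: "is_walk E [u, v] \<longleftrightarrow> E u v"
  by (auto simp: is_walk_def less_Suc_eq)

lemma is_walk_three: "E u w \<Longrightarrow> E w v \<Longrightarrow> is_walk E [u, w, v]"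
  by (auto simp: is_walk_def less_Suc_eq nth_Cons split: nat.splits)

lemma gdist_self: "gdist E u u = 0"
  using gdist_le_walk[OF is_walk_singleton] by simp

lemma gdist_eq_1_if_edge:
  assumes "E u v" "u \<noteq> v"
  shows "gdist E u v = 1"
proof -
  have walk: "is_walk E [u, v]" using assms(1) by (simp add: is_walk_two)
  obtain p where "is_walk E p" "hd p = u" "last p = v" "length p = gdist E u v + 1"
    using gdist_attained[OF walk] by auto
  moreover have "length p \<noteq> 1" using \<open>hd p = u\<close> \<open>last p = v\<close> assms(2) by (cases p) auto
  ultimately show ?thesis using gdist_le_walk[OF walk refl refl] by simp
qed

lemma gdist_eq_2_if_common_neighbour:
  assumes "\<not> E u v" "u \<noteq> v" "E u w" "E w v"
  shows "gdist E u v = 2"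
proof -
  have walk: "is_walk E [u, w, v]" using assms(3,4) by (rule is_walk_three)
  obtain p where p: "is_walk E p" "hd p = u" "last p = v" "length p = gdist E u v + 1"
    using gdist_attained[OF walk] by auto
  have "length p \<noteq> 1" using p(2,3) assms(2) by (cases p) auto
  moreover have "gdist E u v \<noteq> 1"
  proof
    assume "gdist E u v = 1"
    then have "p = [u, v]" using p(2-4) by (cases p; cases "tl p") auto
    then show False using p(1) assms(1) by (simp add: is_walk_two)
  qed
  ultimately show ?thesis using gdist_le_walk[OF walk refl refl] p(4) by simp
qed

lemma sum_mult_dist_mult_commute:
  assumes "\<forall>i<n. \<forall>j<n. gdist E i j = gdist E j i"
  shows "(\<Sum>i<n. x i * dist_mult n E y i) = (\<Sum>j<n. y j * dist_mult n E x j)"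
proof -
  have "(\<Sum>i<n. x i * dist_mult n E y i) = (\<Sum>i<n. \<Sum>j<n. x i * real (gdist E i j) * y j)"
    by (simp add: dist_mult_def sum_distrib_left mult.assoc)
  also have "\<dots> = (\<Sum>j<n. \<Sum>i<n. x i * real (gdist E i j) * y j)"
    by (rule sum.swap)
  also have "\<dots> = (\<Sum>j<n. \<Sum>i<n. y j * (real (gdist E j i) * x i))"
    using assms by (intro sum.cong refl) (simp add: mult_ac)
  also have "\<dots> = (\<Sum>j<n. y j * dist_mult n E x j)"
    by (simp add: dist_mult_def sum_distrib_left)
  finally show ?thesis .
qed

text \<open>Pairing a normalised vector y against a curvature potential x via the symmetry of the
  distance matrix gives \<open>(D y) \<cdot> x = y \<cdot> D x = 1\<close>, so a constant D y must equal
  \<open>1 / (\<Sum> x)\<close>; the normalised potential attains this value.\<close>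
lemma curvature_index_eq_inverse_sum:
  assumes sym: "\<forall>i<n. \<forall>j<n. gdist E i j = gdist E j i"
    and pot: "curvature_potential n E x" and nonzero: "(\<Sum>j<n. x j) \<noteq> 0"
  shows "curvature_index n E = ereal (1 / (\<Sum>j<n. x j))"
proof -
  define S where "S = (\<Sum>j<n. x j)"
  have "S \<noteq> 0" using nonzero by (simp add: S_def)
  have Dx: "dist_mult n E x i = 1" if "i < n" for i
    using pot that by (simp add: curvature_potential_def)
  have "{c. \<exists>y. (\<Sum>j<n. y j) = 1 \<and> (\<forall>i<n. dist_mult n E y i = c)} = {1 / S}"
  proof (intro equalityI subsetI)
    fix c assume "c \<in> {c. \<exists>y. (\<Sum>j<n. y j) = 1 \<and> (\<forall>i<n. dist_mult n E y i = c)}"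
    then obtain y where y1: "(\<Sum>j<n. y j) = 1" and Dy: "\<forall>i<n. dist_mult n E y i = c" by auto
    have "c * S = (\<Sum>i<n. x i * dist_mult n E y i)"
      using Dy by (simp add: S_def sum_distrib_left mult.commute)
    also have "\<dots> = (\<Sum>j<n. y j * dist_mult n E x j)"
      using sym by (rule sum_mult_dist_mult_commute)
    also have "\<dots> = 1"
      using Dx y1 by simp
    finally show "c \<in> {1 / S}" using \<open>S \<noteq> 0\<close> by (simp add: field_simps)
  next
    fix c assume "c \<in> {1 / S}"
    moreover have "(\<Sum>j<n. x j / S) = 1"
      using \<open>S \<noteq> 0\<close> by (simp add: S_def sum_divide_distrib[symmetric])
    moreover have "dist_mult n E (\<lambda>j. x j / S) i = 1 / S" if "i < n" for i
      using Dx[OF that] by (simp add: dist_mult_def sum_divide_distrib[symmetric])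
    ultimately show "c \<in> {c. \<exists>y. (\<Sum>j<n. y j) = 1 \<and> (\<forall>i<n. dist_mult n E y i = c)}"
      by blast
  qed
  then show ?thesis
    using pot nonzero unfolding curvature_index_def by (auto simp: S_def)
qed

lemma curvature_index_single_vertex:
  "connected_graph 1 (\<lambda>_ _. False) \<and> curvature_index 1 (\<lambda>_ _. False) = ereal 0"
proof
  show "connected_graph 1 (\<lambda>_ _. False)"
    unfolding connected_graph_def simple_graph_def by (auto intro!: exI[of _ "[0]"] is_walk_singleton)
  have D0: "dist_mult 1 (\<lambda>_ _. False) x 0 = 0" for x
    by (simp add: dist_mult_def gdist_self)
  then have "distance_exceptional 1 (\<lambda>_ _. False)"
    unfolding distance_exceptional_def curvature_potential_def by auto
  moreover have "{c. \<exists>x. (\<Sum>j<1. x j) = 1 \<and> (\<forall>i<1. dist_mult 1 (\<lambda>_ _. False) x i = c)} = {0}"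
    using D0 by (auto intro: exI[of _ "\<lambda>_. 1"])
  ultimately show "curvature_index 1 (\<lambda>_ _. False) = ereal 0"
    unfolding curvature_index_def by simp
qed

definition complete_multipartite :: "nat \<Rightarrow> (nat \<Rightarrow> 'a) \<Rightarrow> nat \<Rightarrow> nat \<Rightarrow> bool" where
  "complete_multipartite n part u v \<longleftrightarrow> u < n \<and> v < n \<and> part u \<noteq> part v"

definition part_class :: "nat \<Rightarrow> (nat \<Rightarrow> 'a) \<Rightarrow> nat \<Rightarrow> nat set" where
  "part_class n part i = {j. j < n \<and> part j = part i}"

lemma sum_part_class:
  "(\<Sum>j\<in>part_class n part i. f j) = (\<Sum>j<n. if part j = part i then f j else 0)"
proof -
  have "part_class n part i = {j \<in> {..<n}. part j = part i}"
    by (auto simp: part_class_def)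
  then show ?thesis by (simp only: sum.inter_filter[OF finite_lessThan])
qed

lemma part_class_eq:
  "j \<in> part_class n part i \<Longrightarrow> part_class n part j = part_class n part i"
  by (simp add: part_class_def)

lemma ex_other_part:
  assumes "a < n" "b < n" "part a \<noteq> part b"
  obtains k where "k < n" "part k \<noteq> part i"
  using assms by metis

lemma connected_complete_multipartite:
  assumes "a < n" "b < n" "part a \<noteq> part b"
  shows "connected_graph n (complete_multipartite n part)"
  unfolding connected_graph_def
proof (intro conjI allI impI)
  show "simple_graph n (complete_multipartite n part)"
    by (auto simp: simple_graph_def complete_multipartite_def)
  show "1 \<le> n" using assms by simp
next
  fix u v assume "u < n" "v < n"
  obtain k where "k < n" "part k \<noteq> part u" using ex_other_part[OF assms] .
  consider "u = v" | "part u \<noteq> part v" | "u \<noteq> v" "part u = part v" by blast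
  then show "\<exists>p. is_walk (complete_multipartite n part) p \<and> hd p = u \<and> last p = v"
  proof cases
    case 1
    then show ?thesis by (intro exI[of _ "[u]"]) (simp add: is_walk_singleton)
  next
    case 2
    then show ?thesis using \<open>u < n\<close> \<open>v < n\<close>
      by (intro exI[of _ "[u, v]"]) (simp add: is_walk_two complete_multipartite_def)
  next
    case 3
    then show ?thesis using \<open>u < n\<close> \<open>v < n\<close> \<open>k < n\<close> \<open>part k \<noteq> part u\<close>
      by (intro exI[of _ "[u, k, v]"] conjI is_walk_three) (auto simp: complete_multipartite_def)
  qed
qed

lemma gdist_complete_multipartite:
  assumes "a < n" "b < n" "part a \<noteq> part b" "i < n" "j < n"
  shows "gdist (complete_multipartite n part) i j =
    (if i = j then 0 else if part i = part j then 2 else 1)"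
proof -
  obtain k where "k < n" "part k \<noteq> part i" using ex_other_part[OF assms(1-3)] .
  then show ?thesis using assms(4,5)
    by (auto simp: gdist_self gdist_eq_1_if_edge complete_multipartite_def
        intro!: gdist_eq_2_if_common_neighbour[where w = k])
qed

lemma dist_mult_complete_multipartite:
  assumes "a < n" "b < n" "part a \<noteq> part b" "i < n"
  shows "dist_mult n (complete_multipartite n part) x i =
    (\<Sum>j<n. x j) + (\<Sum>j\<in>part_class n part i. x j) - 2 * x i"
proof -
  have "dist_mult n (complete_multipartite n part) x i =
      (\<Sum>j<n. x j + (if part j = part i then x j else 0) - (if i = j then 2 * x i else 0))"
    unfolding dist_mult_def using gdist_complete_multipartite[OF assms(1-4)]
    by (intro sum.cong) auto
  also have "\<dots> = (\<Sum>j<n. x j) + (\<Sum>j\<in>part_class n part i. x j) - 2 * x i"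
    using assms(4) by (simp add: sum.distrib sum_subtractf sum_part_class)
  finally show ?thesis .
qed

lemma sym_gdist_complete_multipartite:
  assumes "a < n" "b < n" "part a \<noteq> part b"
  shows "\<forall>i<n. \<forall>j<n. gdist (complete_multipartite n part) i j = gdist (complete_multipartite n part) j i"
  using gdist_complete_multipartite[OF assms] by simp

lemma curvature_index_complete_multipartite:
  fixes part :: "nat \<Rightarrow> 'a"
  assumes two_parts: "a < n" "b < n" "part a \<noteq> part b"
    and no_pair: "\<forall>j<n. card (part_class n part j) \<noteq> 2"
  defines "T \<equiv> (\<Sum>j<n. 1 / (real (card (part_class n part j)) - 2))"
  assumes "T \<noteq> 0" "T \<noteq> -1"
  shows "curvature_index n (complete_multipartite n part) = ereal (1 + 1 / T)"
proof -
  define m where "m j = real (card (part_class n part j)) - 2" for j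
  define x where "x j = 1 / m j / (1 + T)" for j
  have "1 + T \<noteq> 0" using \<open>T \<noteq> -1\<close> by linarith
  have m_nonzero: "m j \<noteq> 0" if "j < n" for j
    using no_pair that by (simp add: m_def)
  have sum_x: "(\<Sum>j<n. x j) = T / (1 + T)"
    unfolding x_def sum_divide_distrib[symmetric] by (simp add: T_def m_def)
  have class_sum: "(\<Sum>j\<in>part_class n part i. x j) = (m i + 2) * x i" for i
  proof -
    have "(\<Sum>j\<in>part_class n part i. x j) = (\<Sum>j\<in>part_class n part i. x i)"
      by (intro sum.cong) (auto simp: x_def m_def dest: part_class_eq)
    then show ?thesis by (simp add: m_def)
  qed
  have "curvature_potential n (complete_multipartite n part) x"
    unfolding curvature_potential_def
  proof (intro allI impI)
    fix i assume "i < n"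
    have "dist_mult n (complete_multipartite n part) x i = T / (1 + T) + m i * x i"
      unfolding dist_mult_complete_multipartite[OF two_parts \<open>i < n\<close>] sum_x class_sum
      by (simp add: algebra_simps)
    also have "\<dots> = 1"
      using m_nonzero[OF \<open>i < n\<close>] \<open>1 + T \<noteq> 0\<close>
      by (simp add: x_def add_divide_distrib[symmetric])
    finally show "dist_mult n (complete_multipartite n part) x i = 1" .
  qed
  then have "curvature_index n (complete_multipartite n part) = ereal (1 / (T / (1 + T)))"
    using curvature_index_eq_inverse_sum[OF sym_gdist_complete_multipartite[OF two_parts]]
      sum_x \<open>T \<noteq> 0\<close> \<open>1 + T \<noteq> 0\<close> by simp
  also have "1 / (T / (1 + T)) = 1 + 1 / T"
    using \<open>T \<noteq> 0\<close> by (simp add: field_simps)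
  finally show ?thesis .
qed

lemma curvature_index_complete_multipartite_pair:
  assumes "a < n" "b < n" "part a \<noteq> part b"
    and pair: "card (part_class n part a) = 2"
  shows "curvature_index n (complete_multipartite n part) = ereal 1"
proof -
  define x where "x j = (if part j = part a then 1 / 2 else 0 :: real)" for j
  have class_sum: "(\<Sum>j\<in>part_class n part i. x j) = 2 * x i" if "i < n" for i
  proof (cases "part i = part a")
    case True
    then have "part_class n part i = part_class n part a" by (simp add: part_class_def)
    then show ?thesis using True pair by (simp add: x_def part_class_def)
  next
    case False
    then show ?thesis by (simp add: x_def part_class_def)
  qed
  have sum_x: "(\<Sum>j<n. x j) = 1"
  proof -
    have "(\<Sum>j<n. x j) = (\<Sum>j\<in>part_class n part a. 1 / 2)"
      unfolding sum_part_class x_def ..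
    then show ?thesis using pair by simp
  qed
  have "curvature_potential n (complete_multipartite n part) x"
    unfolding curvature_potential_def
    using dist_mult_complete_multipartite[OF assms(1-3)] class_sum sum_x by simp
  then show ?thesis
    using curvature_index_eq_inverse_sum[OF sym_gdist_complete_multipartite[OF assms(1-3)]]
      sum_x by simp
qed

definition block_part :: "nat \<Rightarrow> nat \<Rightarrow> nat \<Rightarrow> nat" where
  "block_part p s v = (if v < p then v else p + (v - p) div s)"

lemma part_class_block_part_singleton:
  assumes "j < p" "j < n"
  shows "part_class n (block_part p s) j = {j}"
  using assms by (auto simp: part_class_def block_part_def)

lemma part_class_block_part_block:
  assumes "p \<le> j" "j < p + r * s"
  defines "k \<equiv> (j - p) div s"
  shows "part_class (p + r * s) (block_part p s) j = {p + k * s ..< p + k * s + s}"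
proof -
  have "0 < s" using assms(1,2) by (cases s) auto
  have "k < r" using assms(1,2) \<open>0 < s\<close> by (simp add: k_def less_mult_imp_div_less)
  then have "k * s + s \<le> r * s" by (metis add.commute mult_Suc mult_le_mono1 Suc_leI)
  have div_eq: "(v - p) div s = k \<longleftrightarrow> k * s \<le> v - p \<and> v - p < k * s + s" for v
    using less_eq_div_iff_mult_less_eq[OF \<open>0 < s\<close>, of k "v - p"]
      div_less_iff_less_mult[OF \<open>0 < s\<close>, of "v - p" "Suc k"] by auto
  have "v \<in> part_class (p + r * s) (block_part p s) j \<longleftrightarrow> v \<in> {p + k * s ..< p + k * s + s}" for v
  proof (cases "v < p")
    case True
    then show ?thesis using assms(1) by (simp add: part_class_def block_part_def)
  next
    case False
    then have "v \<in> part_class (p + r * s) (block_part p s) j \<longleftrightarrow>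
        v < p + r * s \<and> (v - p) div s = k"
      using assms(1) by (simp add: part_class_def block_part_def k_def)
    also have "\<dots> \<longleftrightarrow> v \<in> {p + k * s ..< p + k * s + s}"
      unfolding div_eq using False \<open>k * s + s \<le> r * s\<close> by auto
    finally show ?thesis .
  qed
  then show ?thesis by blast
qed

lemma card_part_class_block_part_block:
  assumes "p \<le> j" "j < p + r * s"
  shows "card (part_class (p + r * s) (block_part p s) j) = s"
  using part_class_block_part_block[OF assms] by simp

lemma sum_inverse_part_size_block_part:
  "(\<Sum>j<p + r * s. 1 / (real (card (part_class (p + r * s) (block_part p s) j)) - 2)) =
    real (r * s) / (real s - 2) - real p"
proof -
  let ?f = "\<lambda>j. 1 / (real (card (part_class (p + r * s) (block_part p s) j)) - 2)"
  have "(\<Sum>j<p + r * s. ?f j) = (\<Sum>j<p. ?f j) + (\<Sum>j\<in>{p..<p + r * s}. ?f j)"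
    by (metis add.commute atLeast0LessThan le_add1 sum.atLeastLessThan_concat zero_le)
  also have "(\<Sum>j<p. ?f j) = (\<Sum>j<p. - 1)"
    by (intro sum.cong) (auto simp: part_class_block_part_singleton)
  also have "(\<Sum>j\<in>{p..<p + r * s}. ?f j) = (\<Sum>j\<in>{p..<p + r * s}. 1 / (real s - 2))"
    by (intro sum.cong) (auto simp: card_part_class_block_part_block)
  finally show ?thesis by simp
qed

lemma rat_as_block_sum:
  fixes t :: rat
  obtains p r s :: nat where "2 \<le> p" "2 < s" "of_rat t = real (r * s) / (real s - 2) - real p"
proof -
  obtain u w where uw: "quotient_of t = (u, w)" by fastforce
  have "w > 0" using quotient_of_denom_pos[OF uw] .
  have t: "(of_rat t :: real) = of_int u / of_int w"
    using quotient_of_div[OF uw] by (simp add: of_rat_divide)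
  define M where "M = \<bar>u\<bar> + 2"
  have "u + M * w \<ge> 0"
    using \<open>w > 0\<close> mult_left_mono[of 1 w M] by (simp add: M_def)
  define r where "r = nat (u + M * w)"
  define p where "p = r + nat M"
  define s where "s = 2 * nat w + 2"
  have r: "real r = of_int u + of_int M * of_int w"
    using \<open>u + M * w \<ge> 0\<close> by (simp add: r_def)
  have p: "real p = real r + of_int M"
    by (simp add: p_def M_def)
  have s: "real s = 2 * of_int w + 2"
    using \<open>w > 0\<close> by (simp add: s_def)
  have "real (r * s) / (real s - 2) - real p = of_int u / of_int w"
    unfolding of_nat_mult s p using \<open>w > 0\<close> by (simp add: r field_simps)
  moreover have "2 \<le> p" "2 < s" using \<open>w > 0\<close> by (auto simp: p_def s_def M_def)
  ultimately show ?thesis using that t by (metis of_nat_mult)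
qed

lemma curvature_index_block_graph:
  fixes p r s :: nat
  assumes "2 \<le> p" "s \<noteq> 2"
  defines "T \<equiv> real (r * s) / (real s - 2) - real p"
  assumes "T \<noteq> 0" "T \<noteq> -1"
  shows "connected_graph (p + r * s) (complete_multipartite (p + r * s) (block_part p s)) \<and>
    curvature_index (p + r * s) (complete_multipartite (p + r * s) (block_part p s)) =
      ereal (1 + 1 / T)"
proof
  have two_parts: "0 < p + r * s" "1 < p + r * s" "block_part p s 0 \<noteq> block_part p s 1"
    using assms(1) by (auto simp: block_part_def)
  then show "connected_graph (p + r * s) (complete_multipartite (p + r * s) (block_part p s))"
    by (rule connected_complete_multipartite)
  have "card (part_class (p + r * s) (block_part p s) j) \<noteq> 2" if "j < p + r * s" for j
    using that \<open>s \<noteq> 2\<close>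
    by (cases "j < p") (simp_all add: part_class_block_part_singleton card_part_class_block_part_block)
  then show "curvature_index (p + r * s) (complete_multipartite (p + r * s) (block_part p s)) =
      ereal (1 + 1 / T)"
    using curvature_index_complete_multipartite[OF two_parts] assms(4,5)
    unfolding T_def sum_inverse_part_size_block_part by blast
qed

lemma curvature_index_path_three:
  "connected_graph 3 (complete_multipartite 3 (block_part 1 2)) \<and>
    curvature_index 3 (complete_multipartite 3 (block_part 1 2)) = ereal 1"
proof
  have two_parts: "1 < (3::nat)" "0 < (3::nat)" "block_part 1 2 1 \<noteq> block_part 1 2 0"
    by (simp_all add: block_part_def)
  then show "connected_graph 3 (complete_multipartite 3 (block_part 1 2))"
    by (rule connected_complete_multipartite)
  have "card (part_class 3 (block_part 1 2) 1) = 2"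
    using card_part_class_block_part_block[of 1 1 1 2] by (simp add: numeral_3_eq_3)
  then show "curvature_index 3 (complete_multipartite 3 (block_part 1 2)) = ereal 1"
    using curvature_index_complete_multipartite_pair[OF two_parts] by simp
qed

theorem theorem5p2:
  fixes q :: rat
  shows "\<exists>n E. connected_graph n E \<and> curvature_index n E = ereal (of_rat q)"
proof -
  consider "q = 0" | "q = 1" | "q \<noteq> 0" "q \<noteq> 1" by blast
  then show ?thesis
  proof cases
    case 1
    then show ?thesis using curvature_index_single_vertex by auto
  next
    case 2
    then show ?thesis using curvature_index_path_three by auto
  next
    case 3
    obtain p r s :: nat where "2 \<le> p" "2 < s"
      and T: "of_rat (1 / (q - 1)) = real (r * s) / (real s - 2) - real p"
      by (rule rat_as_block_sum)
    have "1 / (q - 1) \<noteq> 0" "1 / (q - 1) \<noteq> -1"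
      using 3 by (auto simp: divide_eq_minus_1_iff)
    then have "of_rat (1 / (q - 1)) \<noteq> (0::real)" "of_rat (1 / (q - 1)) \<noteq> (-1::real)"
      by (metis of_rat_eq_0_iff, metis of_rat_1 of_rat_minus of_rat_eq_iff)
    moreover have "1 + 1 / of_rat (1 / (q - 1)) = (of_rat q :: real)"
      by (simp add: of_rat_divide of_rat_diff)
    ultimately show ?thesis
      using curvature_index_block_graph[of p s r] \<open>2 \<le> p\<close> \<open>2 < s\<close> unfolding T by auto
  qed
qed

end
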